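(* Let $(\Sigma_+,\Sigma_-,N_1,N_2,N_3)$ be a solution of the Wainwright–Hsu system satisfying the constraint, with $N_1<0$ and $N_2,N_3>0$, and let $r=(\Sigma_-^2+\frac34(N_2-N_3)^2)^{1/2}$. There exist $T$ (depending on the solution) and a numerical constant $C$ such that the following holds: if $\tau_a<\tau_b$ are consecutive zeros of $\Sigma_-$ with $\tau_a\geq T$ and $r(\tau_a)\geq[(N_2+N_3)(\tau_a)]^{-1/2}$, and if $z_1=\Sigma_+(\tau_a)$, $z_2=\Sigma_+(\tau_b)$, $w_1=-[N_1(N_2+N_3)](\tau_a)$, $w_2=-[N_1(N_2+N_3)](\tau_b)$, then $$z_2-z_1=\Big[-(1-z_1)(1+z_1)^2+\tfrac32w_1(2-z_1)\Big](\tau_b-\tau_a)+\epsilon_1,$$ $$w_2-w_1=(2z_1^2-2z_1+2-3w_1)\,w_1\,(\tau_b-\tau_a)+\epsilon_2,$$ where $|\epsilon_i|\leq C\,[(N_2+N_3)(\tau_a)]^{-3/2}$ for $i=1,2$.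
   Context: Wainwright–Hsu system: for functions $N_1,N_2,N_3,\Sigma_+,\Sigma_-$ of $\tau\in\mathbb{R}$ (prime denotes $d/d\tau$), $N_1'=(q-4\Sigma_+)N_1$, $N_2'=(q+2\Sigma_++2\sqrt3\Sigma_-)N_2$, $N_3'=(q+2\Sigma_+-2\sqrt3\Sigma_-)N_3$, $\Sigma_+'=-(2-q)\Sigma_+-3S_+$, $\Sigma_-'=-(2-q)\Sigma_--3S_-$, where $q=2(\Sigma_+^2+\Sigma_-^2)$, $S_+=\frac12[(N_2-N_3)^2-N_1(2N_1-N_2-N_3)]$, $S_-=\frac{\sqrt3}{2}(N_3-N_2)(N_1-N_2-N_3)$, together with the constraint $\Sigma_+^2+\Sigma_-^2+\frac34[N_1^2+N_2^2+N_3^2-2(N_1N_2+N_2N_3+N_1N_3)]=1$. Solutions with these sign conditions exist for all $\tau\in\mathbb{R}$. "Consecutive zeros" means $\Sigma_-(\tau_a)=\Sigma_-(\tau_b)=0$ and $\Sigma_-\neq0$ on $(\tau_a,\tau_b)$. *)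

theory Defs
  imports "HOL-Analysis.Analysis"
begin

definition WH_q :: "real \<Rightarrow> real \<Rightarrow> real" where
  "WH_q sp sm = 2 * (sp^2 + sm^2)"

definition WH_Splus :: "real \<Rightarrow> real \<Rightarrow> real \<Rightarrow> real" where
  "WH_Splus n1 n2 n3 = (1/2) * ((n2 - n3)^2 - n1 * (2*n1 - n2 - n3))"

definition WH_Sminus :: "real \<Rightarrow> real \<Rightarrow> real \<Rightarrow> real" where
  "WH_Sminus n1 n2 n3 = (sqrt 3 / 2) * (n3 - n2) * (n1 - n2 - n3)"

definition WH_solution ::
  "(real \<Rightarrow> real) \<Rightarrow> (real \<Rightarrow> real) \<Rightarrow> (real \<Rightarrow> real) \<Rightarrow> (real \<Rightarrow> real) \<Rightarrow> (real \<Rightarrow> real) \<Rightarrow> bool" where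
  "WH_solution N1 N2 N3 Sp Sm \<longleftrightarrow>
    (\<forall>t. (N1 has_real_derivative ((WH_q (Sp t) (Sm t) - 4 * Sp t) * N1 t)) (at t)
       \<and> (N2 has_real_derivative ((WH_q (Sp t) (Sm t) + 2 * Sp t + 2 * sqrt 3 * Sm t) * N2 t)) (at t)
       \<and> (N3 has_real_derivative ((WH_q (Sp t) (Sm t) + 2 * Sp t - 2 * sqrt 3 * Sm t) * N3 t)) (at t)
       \<and> (Sp has_real_derivative (- (2 - WH_q (Sp t) (Sm t)) * Sp t - 3 * WH_Splus (N1 t) (N2 t) (N3 t))) (at t)
       \<and> (Sm has_real_derivative (- (2 - WH_q (Sp t) (Sm t)) * Sm t - 3 * WH_Sminus (N1 t) (N2 t) (N3 t))) (at t)
       \<and> (Sp t)^2 + (Sm t)^2 + (3/4) * ((N1 t)^2 + (N2 t)^2 + (N3 t)^2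
            - 2 * (N1 t * N2 t + N2 t * N3 t + N1 t * N3 t)) = 1)"

definition consecutive_zeros :: "(real \<Rightarrow> real) \<Rightarrow> real \<Rightarrow> real \<Rightarrow> bool" where
  "consecutive_zeros f a b \<longleftrightarrow> a < b \<and> f a = 0 \<and> f b = 0 \<and> (\<forall>t. a < t \<and> t < b \<longrightarrow> f t \<noteq> 0)"

end

theory Submission
  imports Defs
begin

(*
  Write n = N2 + N3, y = (sqrt 3 / 2) (N2 - N3), w = - N1 n, u = Sm y / n and P = - N1 N2 N3.
  The constraint bounds Sp, Sm, y and w, and gives 6 P <= n, while P' = 3 q P.

  First, n tends to infinity: for a suitable constant K the function Sp - u + (K/6) ln P - tau/2
  is nondecreasing, so ln P grows at least linearly.

  Second, for large n the point (Sm, y) turns with angular velocity at least 3 n - 2, while n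
  decays at most like exp (- tau / 2). Hence consecutive zeros of Sm are at most 5/n apart, and n
  stays comparable to n(tau_a) in between.

  Third, up to O(1/n) the rates of Sp and w differ from the averaged vector field by multiples of
  Sm^2 - y^2, which is one third of the leading part of u'. The corrected quantities
  Sp - (1 + Sp) u / 3 and w - 2 w u / 3 agree with Sp and w at zeros of Sm and have rates within
  O(1/n) of the averaged field at tau_a; integrating over a time O(1/n) leaves an error O(n^-2).
*)

lemma abs_mult_le_mult:
  fixes a b A B :: real
  assumes "\<bar>a\<bar> \<le> A" "\<bar>b\<bar> \<le> B"
  shows "\<bar>a * b\<bar> \<le> A * B"
  unfolding abs_mult using assms by (intro mult_mono) auto

lemma abs_add_mult_le:
  fixes a b A B p r :: real
  assumes "\<bar>A\<bar> \<le> p" "\<bar>B\<bar> \<le> r"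
  shows "\<bar>a * A + b * B\<bar> \<le> p * \<bar>a\<bar> + r * \<bar>b\<bar>"
proof -
  have "\<bar>a * A + b * B\<bar> \<le> \<bar>a\<bar> * \<bar>A\<bar> + \<bar>b\<bar> * \<bar>B\<bar>"
    by (metis abs_mult abs_triangle_ineq)
  also have "\<dots> \<le> \<bar>a\<bar> * p + \<bar>b\<bar> * r"
    using assms by (intro add_mono mult_left_mono) auto
  finally show ?thesis by (simp add: mult.commute)
qed

lemma abs_add3_le:
  fixes a b c :: real
  shows "\<bar>a + b + c\<bar> \<le> \<bar>a\<bar> + \<bar>b\<bar> + \<bar>c\<bar>"
  using abs_triangle_ineq[of "a + b" c] abs_triangle_ineq[of a b] by linarith

lemma abs_change_sub_linear_le:
  fixes f :: "real \<Rightarrow> real"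
  assumes "a \<le> b"
    and rate: "\<And>t. a \<le> t \<Longrightarrow> t \<le> b \<Longrightarrow> \<exists>D. (f has_real_derivative D) (at t) \<and> \<bar>D - c\<bar> \<le> M"
  shows "\<bar>f b - f a - c * (b - a)\<bar> \<le> M * (b - a)"
proof -
  have "f a - (c - M) * a \<le> f b - (c - M) * b"
  proof (rule DERIV_nonneg_imp_nondecreasing[OF \<open>a \<le> b\<close>])
    fix t assume "a \<le> t" "t \<le> b"
    with rate obtain D where "(f has_real_derivative D) (at t)" "\<bar>D - c\<bar> \<le> M" by blast
    then show "\<exists>y. ((\<lambda>t. f t - (c - M) * t) has_real_derivative y) (at t) \<and> 0 \<le> y"
      by (intro exI[of _ "D - (c - M)"]) (auto intro!: derivative_eq_intros)
  qed
  moreover have "(c + M) * a - f a \<le> (c + M) * b - f b"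
  proof (rule DERIV_nonneg_imp_nondecreasing[OF \<open>a \<le> b\<close>])
    fix t assume "a \<le> t" "t \<le> b"
    with rate obtain D where "(f has_real_derivative D) (at t)" "\<bar>D - c\<bar> \<le> M" by blast
    then show "\<exists>y. ((\<lambda>t. (c + M) * t - f t) has_real_derivative y) (at t) \<and> 0 \<le> y"
      by (intro exI[of _ "(c + M) - D"]) (auto intro!: derivative_eq_intros)
  qed
  ultimately show ?thesis
    by (simp add: abs_le_iff algebra_simps)
qed

lemma div_square_le_powr_neg_three_halves:
  fixes x C :: real
  assumes "1 \<le> x" "0 \<le> C"
  shows "C / x^2 \<le> C * x powr (-3/2)"
proof -
  have "x powr (-2) \<le> x powr (-3/2)"
    using assms by (intro powr_mono) auto
  moreover have "x powr (-2) = 1 / x^2"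
    using assms by (simp add: powr_minus_divide)
  ultimately show ?thesis
    using assms by (metis mult_left_mono times_divide_eq_right mult_1_right)
qed

section \<open>The averaged vector field\<close>

definition avg_Sp_rhs :: "real \<Rightarrow> real \<Rightarrow> real" where
  "avg_Sp_rhs z w = - (1 - z) * (1 + z)^2 + 3/2 * w * (2 - z)"

definition avg_w_rhs :: "real \<Rightarrow> real \<Rightarrow> real" where
  "avg_w_rhs z w = (2 * z^2 - 2 * z + 2 - 3 * w) * w"

lemma avg_Sp_rhs_lipschitz:
  assumes "\<bar>z\<bar> \<le> 1" "\<bar>z'\<bar> \<le> 1" "0 \<le> w" "w \<le> 1"
  shows "\<bar>avg_Sp_rhs z w - avg_Sp_rhs z' w'\<bar> \<le> 7 * \<bar>z - z'\<bar> + 5 * \<bar>w - w'\<bar>"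
proof -
  have diff: "avg_Sp_rhs z w - avg_Sp_rhs z' w'
      = (z - z') * (-1 + (z + z') + (z * z + z * z' + z' * z') - 3/2 * w) + (w - w') * (3 - 3/2 * z')"
    unfolding avg_Sp_rhs_def by (simp add: power2_eq_square field_simps)
  have "\<bar>z * z\<bar> \<le> 1" "\<bar>z * z'\<bar> \<le> 1" "\<bar>z' * z'\<bar> \<le> 1"
    using assms by (intro abs_mult_le_mult[where A = 1 and B = 1, simplified]; simp)+
  moreover have "z * z + z * z' + z' * z' = (z + z' / 2)^2 + 3/4 * z'^2"
    by (simp add: power2_eq_square field_simps)
  then have "0 \<le> z * z + z * z' + z' * z'"
    by simp
  ultimately have "\<bar>-1 + (z + z') + (z * z + z * z' + z' * z') - 3/2 * w\<bar> \<le> 7"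
    using assms by (simp add: abs_le_iff)
  moreover have "\<bar>3 - 3/2 * z'\<bar> \<le> 5"
    using assms by (simp add: abs_le_iff)
  ultimately show ?thesis
    unfolding diff using abs_add_mult_le by simp
qed

lemma avg_w_rhs_lipschitz:
  assumes "\<bar>z\<bar> \<le> 1" "\<bar>z'\<bar> \<le> 1" "0 \<le> w" "w \<le> 1" "0 \<le> w'" "w' \<le> 1"
  shows "\<bar>avg_w_rhs z w - avg_w_rhs z' w'\<bar> \<le> 6 * \<bar>z - z'\<bar> + 12 * \<bar>w - w'\<bar>"
proof -
  have diff: "avg_w_rhs z w - avg_w_rhs z' w'
      = (z - z') * (2 * (z * w) + 2 * (z' * w) - 2 * w) + (w - w') * (2 * (z' * z') - 2 * z' + 2 - 3 * (w + w'))"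
    unfolding avg_w_rhs_def by (simp add: power2_eq_square algebra_simps)
  have "\<bar>z * w\<bar> \<le> 1" "\<bar>z' * w\<bar> \<le> 1" "\<bar>z' * z'\<bar> \<le> 1"
    using assms by (intro abs_mult_le_mult[where A = 1 and B = 1, simplified]; simp)+
  then have "\<bar>2 * (z * w) + 2 * (z' * w) - 2 * w\<bar> \<le> 6"
    using assms by (simp add: abs_le_iff)
  moreover have "\<bar>2 * (z' * z') - 2 * z' + 2 - 3 * (w + w')\<bar> \<le> 12"
    using assms \<open>\<bar>z' * z'\<bar> \<le> 1\<close> zero_le_square[of z'] unfolding abs_le_iff by argo
  ultimately show ?thesis
    unfolding diff using abs_add_mult_le by simp
qed

locale bianchi_VIII_solution =
  fixes N1 N2 N3 Sp Sm :: "real \<Rightarrow> real"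
  assumes WH: "WH_solution N1 N2 N3 Sp Sm"
    and N1_neg: "\<And>t. N1 t < 0" and N2_pos: "\<And>t. 0 < N2 t" and N3_pos: "\<And>t. 0 < N3 t"
begin

definition q :: "real \<Rightarrow> real" where "q t = WH_q (Sp t) (Sm t)"
definition n23 :: "real \<Rightarrow> real" where "n23 t = N2 t + N3 t"
definition y23 :: "real \<Rightarrow> real" where "y23 t = sqrt 3 / 2 * (N2 t - N3 t)"
definition W :: "real \<Rightarrow> real" where "W t = - N1 t * n23 t"
definition P :: "real \<Rightarrow> real" where "P t = - N1 t * N2 t * N3 t"
definition u :: "real \<Rightarrow> real" where "u t = Sm t * y23 t / n23 t"

definition Sp_rate :: "real \<Rightarrow> real" where
  "Sp_rate t = - (2 - q t) * Sp t - 2 * (y23 t)^2 + 3 * (N1 t)^2 + 3/2 * W t"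
definition W_rate :: "real \<Rightarrow> real" where
  "W_rate t = 2 * (q t - Sp t) * W t - 4 * N1 t * Sm t * y23 t"
definition u_rate :: "real \<Rightarrow> real" where
  "u_rate t = 3 * ((Sm t)^2 - (y23 t)^2) - (2 - q t) * Sm t * y23 t / n23 t
     + 3 * N1 t * (y23 t)^2 / n23 t - 4 * (Sm t)^2 * (y23 t)^2 / (n23 t)^2"

lemma N1_deriv: "(N1 has_real_derivative (q t - 4 * Sp t) * N1 t) (at t)"
  and N2_deriv: "(N2 has_real_derivative (q t + 2 * Sp t + 2 * sqrt 3 * Sm t) * N2 t) (at t)"
  and N3_deriv: "(N3 has_real_derivative (q t + 2 * Sp t - 2 * sqrt 3 * Sm t) * N3 t) (at t)"
  using WH unfolding WH_solution_def q_def by blast+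

lemma y23_sq: "(y23 t)^2 = 3/4 * (N2 t - N3 t)^2"
  by (simp add: y23_def power_mult_distrib power_divide)

lemma constraint: "(Sp t)^2 + (Sm t)^2 + (y23 t)^2 + 3/4 * (N1 t)^2 + 3/2 * W t = 1"
proof -
  have "(Sp t)^2 + (Sm t)^2 + 3/4 * ((N1 t)^2 + (N2 t)^2 + (N3 t)^2
      - 2 * (N1 t * N2 t + N2 t * N3 t + N1 t * N3 t)) = 1"
    using WH unfolding WH_solution_def by blast
  then show ?thesis
    unfolding y23_sq W_def n23_def by (simp add: power2_eq_square algebra_simps)
qed

lemma n23_pos: "0 < n23 t"
  using N2_pos N3_pos by (simp add: add_pos_pos n23_def)

lemma W_pos: "0 < W t"
  using N1_neg n23_pos by (simp add: W_def mult_neg_pos)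

lemma P_pos: "0 < P t"
  unfolding P_def using N1_neg[of t] N2_pos[of t] N3_pos[of t] by (intro mult_pos_pos) auto

lemma W_le: "W t \<le> 2/3"
  using constraint[of t] zero_le_power2[of "Sp t"] zero_le_power2[of "Sm t"]
    zero_le_power2[of "y23 t"] zero_le_power2[of "N1 t"] by linarith

lemma sum_sq_le: "(Sp t)^2 + (Sm t)^2 + (y23 t)^2 \<le> 1"
  using constraint[of t] W_pos[of t] zero_le_power2[of "N1 t"] by linarith

lemma abs_Sp_le: "\<bar>Sp t\<bar> \<le> 1"
  and abs_y23_le: "\<bar>y23 t\<bar> \<le> 1"
  using sum_sq_le[of t] zero_le_power2[of "Sp t"] zero_le_power2[of "Sm t"] zero_le_power2[of "y23 t"]
  unfolding abs_square_le_1[symmetric] by linarith+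

lemma abs_Sm_mult_y23_le: "\<bar>Sm t * y23 t\<bar> \<le> 1/2"
proof -
  have "2 * \<bar>Sm t\<bar> * \<bar>y23 t\<bar> \<le> (Sm t)^2 + (y23 t)^2"
    using sum_squares_bound[of "\<bar>Sm t\<bar>" "\<bar>y23 t\<bar>"] by simp
  then show ?thesis
    using sum_sq_le[of t] zero_le_power2[of "Sp t"] unfolding abs_mult by linarith
qed

lemma q_nonneg: "0 \<le> q t"
  by (simp add: q_def WH_q_def)

lemma q_le: "q t \<le> 2"
  using sum_sq_le[of t] by (simp add: q_def WH_q_def) (use zero_le_power2[of "y23 t"] in linarith)

lemma abs_N1_eq: "\<bar>N1 t\<bar> = W t / n23 t"
  using N1_neg[of t] n23_pos[of t] by (simp add: W_def)

lemma Sp_deriv: "(Sp has_real_derivative Sp_rate t) (at t)"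
proof -
  have "(Sp has_real_derivative - (2 - q t) * Sp t - 3 * WH_Splus (N1 t) (N2 t) (N3 t)) (at t)"
    using WH unfolding WH_solution_def q_def by blast
  moreover have "- (2 - q t) * Sp t - 3 * WH_Splus (N1 t) (N2 t) (N3 t) = Sp_rate t"
    unfolding Sp_rate_def y23_sq W_def n23_def WH_Splus_def by (simp add: power2_eq_square algebra_simps)
  ultimately show ?thesis by simp
qed

lemma Sm_deriv: "(Sm has_real_derivative - (2 - q t) * Sm t - 3 * (n23 t - N1 t) * y23 t) (at t)"
proof -
  have "(Sm has_real_derivative - (2 - q t) * Sm t - 3 * WH_Sminus (N1 t) (N2 t) (N3 t)) (at t)"
    using WH unfolding WH_solution_def q_def by blast
  moreover have "- (2 - q t) * Sm t - 3 * WH_Sminus (N1 t) (N2 t) (N3 t)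
      = - (2 - q t) * Sm t - 3 * (n23 t - N1 t) * y23 t"
    unfolding WH_Sminus_def y23_def n23_def by (simp add: field_simps)
  ultimately show ?thesis by (rule DERIV_cong)
qed

lemma n23_deriv: "(n23 has_real_derivative (q t + 2 * Sp t) * n23 t + 4 * Sm t * y23 t) (at t)"
proof -
  have "((\<lambda>t. N2 t + N3 t) has_real_derivative
      (q t + 2 * Sp t + 2 * sqrt 3 * Sm t) * N2 t + (q t + 2 * Sp t - 2 * sqrt 3 * Sm t) * N3 t) (at t)"
    by (intro DERIV_add N2_deriv N3_deriv)
  moreover have "(q t + 2 * Sp t + 2 * sqrt 3 * Sm t) * N2 t + (q t + 2 * Sp t - 2 * sqrt 3 * Sm t) * N3 t
      = (q t + 2 * Sp t) * n23 t + 4 * Sm t * y23 t"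
    unfolding n23_def y23_def by (simp add: field_simps)
  ultimately show ?thesis by (simp add: n23_def[abs_def])
qed

lemma y23_deriv: "(y23 has_real_derivative (q t + 2 * Sp t) * y23 t + 3 * Sm t * n23 t) (at t)"
proof -
  have "((\<lambda>t. sqrt 3 / 2 * (N2 t - N3 t)) has_real_derivative
      sqrt 3 / 2 * ((q t + 2 * Sp t + 2 * sqrt 3 * Sm t) * N2 t - (q t + 2 * Sp t - 2 * sqrt 3 * Sm t) * N3 t)) (at t)"
    by (intro DERIV_cmult DERIV_diff N2_deriv N3_deriv)
  moreover have "sqrt 3 / 2 * ((q t + 2 * Sp t + 2 * sqrt 3 * Sm t) * N2 t - (q t + 2 * Sp t - 2 * sqrt 3 * Sm t) * N3 t)
      = (q t + 2 * Sp t) * y23 t + 3 * Sm t * n23 t"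
    unfolding n23_def y23_def by (simp add: field_simps)
  ultimately have "((\<lambda>t. sqrt 3 / 2 * (N2 t - N3 t)) has_real_derivative
      (q t + 2 * Sp t) * y23 t + 3 * Sm t * n23 t) (at t)"
    by (rule DERIV_cong)
  then show ?thesis unfolding y23_def[abs_def] .
qed

lemma W_deriv: "(W has_real_derivative W_rate t) (at t)"
proof -
  have "((\<lambda>t. - N1 t * n23 t) has_real_derivative
      - ((q t - 4 * Sp t) * N1 t * n23 t + ((q t + 2 * Sp t) * n23 t + 4 * Sm t * y23 t) * N1 t)) (at t)"
    using DERIV_minus[OF DERIV_mult[OF N1_deriv n23_deriv]] by simp
  moreover have "- ((q t - 4 * Sp t) * N1 t * n23 t + ((q t + 2 * Sp t) * n23 t + 4 * Sm t * y23 t) * N1 t)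
      = W_rate t"
    unfolding W_rate_def W_def by (simp add: algebra_simps)
  ultimately show ?thesis by (simp add: W_def[abs_def])
qed

lemma P_deriv: "(P has_real_derivative 3 * q t * P t) (at t)"
proof -
  have "((\<lambda>t. - N1 t * N2 t * N3 t) has_real_derivative
      - ((q t - 4 * Sp t) * N1 t * N2 t * N3 t + (q t + 2 * Sp t + 2 * sqrt 3 * Sm t) * N2 t * N1 t * N3 t
        + (q t + 2 * Sp t - 2 * sqrt 3 * Sm t) * N3 t * (N1 t * N2 t))) (at t)"
    using DERIV_minus[OF DERIV_mult[OF DERIV_mult[OF N1_deriv N2_deriv] N3_deriv]] by (simp add: algebra_simps)
  moreover have "- ((q t - 4 * Sp t) * N1 t * N2 t * N3 t + (q t + 2 * Sp t + 2 * sqrt 3 * Sm t) * N2 t * N1 t * N3 t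
        + (q t + 2 * Sp t - 2 * sqrt 3 * Sm t) * N3 t * (N1 t * N2 t)) = 3 * q t * P t"
    unfolding P_def by (simp add: algebra_simps)
  ultimately show ?thesis by (simp add: P_def[abs_def])
qed

lemma u_deriv: "(u has_real_derivative u_rate t) (at t)"
proof -
  have n: "n23 t \<noteq> 0" using n23_pos[of t] by simp
  have "((\<lambda>t. Sm t * y23 t / n23 t) has_real_derivative
     (((- (2 - q t) * Sm t - 3 * (n23 t - N1 t) * y23 t) * y23 t + ((q t + 2 * Sp t) * y23 t + 3 * Sm t * n23 t) * Sm t) * n23 t
       - Sm t * y23 t * ((q t + 2 * Sp t) * n23 t + 4 * Sm t * y23 t)) / (n23 t * n23 t)) (at t)"
    using DERIV_divide[OF DERIV_mult[OF Sm_deriv y23_deriv] n23_deriv n] by simp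
  moreover have "(((- (2 - q t) * Sm t - 3 * (n23 t - N1 t) * y23 t) * y23 t + ((q t + 2 * Sp t) * y23 t + 3 * Sm t * n23 t) * Sm t) * n23 t
       - Sm t * y23 t * ((q t + 2 * Sp t) * n23 t + 4 * Sm t * y23 t)) / (n23 t * n23 t) = u_rate t"
    using n by (simp add: u_rate_def field_simps power2_eq_square)
  ultimately show ?thesis by (simp add: u_def[abs_def])
qed

lemma abs_Sp_rate_le: "\<bar>Sp_rate t\<bar> \<le> 6"
proof -
  have "\<bar>(2 - q t) * Sp t\<bar> \<le> 2 * 1"
    using q_nonneg[of t] q_le[of t] abs_Sp_le[of t] by (intro abs_mult_le_mult) auto
  then show ?thesis
    using constraint[of t] W_pos[of t] zero_le_power2[of "Sp t"] zero_le_power2[of "Sm t"]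
      zero_le_power2[of "y23 t"] zero_le_power2[of "N1 t"] abs_y23_le[of t]
    unfolding Sp_rate_def abs_le_iff mult_minus_left by argo
qed

lemma abs_N1_le: "\<bar>N1 t\<bar> \<le> 2/3 / n23 t"
  unfolding abs_N1_eq using W_le[of t] n23_pos[of t] by (intro divide_right_mono) auto

lemma abs_N1_le_two_thirds:
  assumes "1 \<le> n23 t"
  shows "\<bar>N1 t\<bar> \<le> 2/3"
proof -
  have "2/3 / n23 t \<le> 2/3"
    using assms by (simp add: field_simps)
  then show ?thesis
    using abs_N1_le[of t] by linarith
qed

lemma abs_W_rate_le:
  assumes "1 \<le> n23 t"
  shows "\<bar>W_rate t\<bar> \<le> 7"
proof -
  have "\<bar>2 * (q t - Sp t) * W t\<bar> \<le> 6 * (2/3)"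
    using q_nonneg[of t] q_le[of t] abs_Sp_le[of t] W_pos[of t] W_le[of t]
    by (intro abs_mult_le_mult) auto
  moreover have "\<bar>4 * N1 t * (Sm t * y23 t)\<bar> \<le> (4 * (2/3)) * (1/2)"
    using abs_N1_le_two_thirds[OF assms] abs_Sm_mult_y23_le[of t] by (intro abs_mult_le_mult) auto
  moreover have "W_rate t = 2 * (q t - Sp t) * W t - 4 * N1 t * (Sm t * y23 t)"
    by (simp add: W_rate_def mult.assoc)
  ultimately show ?thesis
    using abs_triangle_ineq4[of "2 * (q t - Sp t) * W t" "4 * N1 t * (Sm t * y23 t)"] by simp
qed

lemma abs_u_le: "\<bar>u t\<bar> \<le> 1 / n23 t"
  using abs_Sm_mult_y23_le[of t] n23_pos[of t]
  by (simp add: u_def abs_divide divide_right_mono)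

lemma abs_u_rate_sub_le:
  assumes "1 \<le> n23 t"
  shows "\<bar>u_rate t - 3 * ((Sm t)^2 - (y23 t)^2)\<bar> \<le> 4 / n23 t"
proof -
  have n: "0 < n23 t" using n23_pos .
  have "\<bar>(2 - q t) * (Sm t * y23 t)\<bar> \<le> 2 * (1/2)"
    using q_nonneg[of t] q_le[of t] abs_Sm_mult_y23_le[of t] by (intro abs_mult_le_mult) auto
  then have a: "\<bar>(2 - q t) * Sm t * y23 t / n23 t\<bar> \<le> 1 / n23 t"
    using n by (simp add: abs_divide divide_right_mono mult.assoc)
  have "\<bar>3 * N1 t * (y23 t)^2\<bar> \<le> (3 * (2/3 / n23 t)) * 1"
    using abs_N1_le[of t] abs_y23_le[of t] by (intro abs_mult_le_mult) (auto simp: abs_square_le_1)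
  also have "\<dots> \<le> 2" using assms by (simp add: field_simps)
  finally have b: "\<bar>3 * N1 t * (y23 t)^2 / n23 t\<bar> \<le> 2 / n23 t"
    using n by (simp add: abs_divide divide_right_mono)
  have "\<bar>2 * (Sm t * y23 t)\<bar> \<le> 1"
    using abs_Sm_mult_y23_le[of t] by simp
  then have "(2 * (Sm t * y23 t))^2 \<le> 1"
    by (simp only: abs_square_le_1)
  moreover have "4 * (Sm t)^2 * (y23 t)^2 = (2 * (Sm t * y23 t))^2"
    by algebra
  ultimately have "4 * (Sm t)^2 * (y23 t)^2 \<le> 1"
    by simp
  then have "4 * (Sm t)^2 * (y23 t)^2 / (n23 t)^2 \<le> 1 / (n23 t)^2"
    by (simp add: divide_right_mono)
  also have "\<dots> \<le> 1 / n23 t"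
    using assms by (simp add: field_simps power2_eq_square)
  finally have c: "\<bar>4 * (Sm t)^2 * (y23 t)^2 / (n23 t)^2\<bar> \<le> 1 / n23 t"
    by simp
  have "\<bar>u_rate t - 3 * ((Sm t)^2 - (y23 t)^2)\<bar> = \<bar>- ((2 - q t) * Sm t * y23 t / n23 t)
      + 3 * N1 t * (y23 t)^2 / n23 t - 4 * (Sm t)^2 * (y23 t)^2 / (n23 t)^2\<bar>"
    by (simp add: u_rate_def)
  also have "\<dots> \<le> \<bar>(2 - q t) * Sm t * y23 t / n23 t\<bar> + \<bar>3 * N1 t * (y23 t)^2 / n23 t\<bar>
      + \<bar>4 * (Sm t)^2 * (y23 t)^2 / (n23 t)^2\<bar>"
    using abs_add3_le[of "- ((2 - q t) * Sm t * y23 t / n23 t)" "3 * N1 t * (y23 t)^2 / n23 t"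
        "- (4 * (Sm t)^2 * (y23 t)^2 / (n23 t)^2)"] by simp
  also have "\<dots> \<le> 1 / n23 t + 2 / n23 t + 1 / n23 t"
    using a b c by linarith
  finally show ?thesis
    by (simp add: add_divide_distrib[symmetric])
qed

lemma Sp_rate_eq:
  "Sp_rate t = (1 + Sp t) * ((Sm t)^2 - (y23 t)^2) + avg_Sp_rhs (Sp t) (W t)
     + (N1 t)^2 * (15/4 - 3/4 * Sp t)"
proof -
  have y: "(y23 t)^2 = 1 - (Sp t)^2 - (Sm t)^2 - 3/4 * (N1 t)^2 - 3/2 * W t"
    using constraint[of t] by linarith
  show ?thesis
    unfolding Sp_rate_def avg_Sp_rhs_def q_def WH_q_def y by algebra
qed

lemma W_rate_eq:
  "W_rate t = 2 * W t * ((Sm t)^2 - (y23 t)^2) + avg_w_rhs (Sp t) (W t)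
     - 3/2 * W t * (N1 t)^2 - 4 * N1 t * Sm t * y23 t"
proof -
  have y: "(y23 t)^2 = 1 - (Sp t)^2 - (Sm t)^2 - 3/4 * (N1 t)^2 - 3/2 * W t"
    using constraint[of t] by linarith
  show ?thesis
    unfolding W_rate_def avg_w_rhs_def q_def WH_q_def y by algebra
qed

definition Sp_corrected :: "real \<Rightarrow> real" where
  "Sp_corrected t = Sp t - (1 + Sp t) * u t / 3"

definition W_corrected :: "real \<Rightarrow> real" where
  "W_corrected t = W t - 2/3 * W t * u t"

lemma Sp_corrected_rate:
  assumes n: "1 \<le> n23 t"
  shows "\<exists>D. (Sp_corrected has_real_derivative D) (at t) \<and> \<bar>D - avg_Sp_rhs (Sp t) (W t)\<bar> \<le> 7 / n23 t"
proof (intro exI conjI)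
  let ?D = "Sp_rate t - (Sp_rate t * u t + (1 + Sp t) * u_rate t) / 3"
  show "(Sp_corrected has_real_derivative ?D) (at t)"
    unfolding Sp_corrected_def[abs_def]
    by (auto intro!: derivative_eq_intros Sp_deriv u_deriv simp: algebra_simps)
  note N1 = abs_N1_le_two_thirds[OF n] abs_N1_le[of t]
  have "\<bar>(N1 t * N1 t) * (15/4 - 3/4 * Sp t)\<bar> \<le> ((2/3 / n23 t) * (2/3)) * (9/2)"
    using N1 abs_Sp_le[of t] by (intro abs_mult_le_mult) (auto simp: abs_le_iff)
  then have a: "\<bar>(N1 t)^2 * (15/4 - 3/4 * Sp t)\<bar> \<le> 2 / n23 t"
    by (simp add: power2_eq_square)
  have "\<bar>1/3 * (Sp_rate t * u t)\<bar> \<le> 1/3 * (6 * (1 / n23 t))"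
    using abs_Sp_rate_le[of t] abs_u_le[of t] by (intro abs_mult_le_mult) auto
  then have b: "\<bar>1/3 * (Sp_rate t * u t)\<bar> \<le> 2 / n23 t"
    by simp
  have "\<bar>1/3 * ((1 + Sp t) * (u_rate t - 3 * ((Sm t)^2 - (y23 t)^2)))\<bar> \<le> 1/3 * (2 * (4 / n23 t))"
    using abs_Sp_le[of t] abs_u_rate_sub_le[OF n] by (intro abs_mult_le_mult) (auto simp: abs_le_iff)
  also have "\<dots> \<le> 3 / n23 t"
    using n23_pos[of t] by (simp add: field_simps)
  finally have c: "\<bar>1/3 * ((1 + Sp t) * (u_rate t - 3 * ((Sm t)^2 - (y23 t)^2)))\<bar> \<le> 3 / n23 t" .
  have "?D - avg_Sp_rhs (Sp t) (W t) = (N1 t)^2 * (15/4 - 3/4 * Sp t) + (- (1/3 * (Sp_rate t * u t)))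
      + (- (1/3 * ((1 + Sp t) * (u_rate t - 3 * ((Sm t)^2 - (y23 t)^2)))))"
    using Sp_rate_eq[of t] by algebra
  then have "\<bar>?D - avg_Sp_rhs (Sp t) (W t)\<bar> \<le> \<bar>(N1 t)^2 * (15/4 - 3/4 * Sp t)\<bar>
      + \<bar>1/3 * (Sp_rate t * u t)\<bar> + \<bar>1/3 * ((1 + Sp t) * (u_rate t - 3 * ((Sm t)^2 - (y23 t)^2)))\<bar>"
    using abs_add3_le by (metis abs_minus_cancel)
  also have "\<dots> \<le> 7 / n23 t"
    using a b c by (simp add: add_divide_distrib[symmetric])
  finally show "\<bar>?D - avg_Sp_rhs (Sp t) (W t)\<bar> \<le> 7 / n23 t" .
qed

lemma W_corrected_rate:
  assumes n: "1 \<le> n23 t"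
  shows "\<exists>D. (W_corrected has_real_derivative D) (at t) \<and> \<bar>D - avg_w_rhs (Sp t) (W t)\<bar> \<le> 9 / n23 t"
proof (intro exI conjI)
  let ?D = "W_rate t - 2/3 * (W_rate t * u t + W t * u_rate t)"
  show "(W_corrected has_real_derivative ?D) (at t)"
    unfolding W_corrected_def[abs_def]
    by (auto intro!: derivative_eq_intros W_deriv u_deriv simp: algebra_simps)
  note N1 = abs_N1_le_two_thirds[OF n] abs_N1_le[of t]
  have W: "\<bar>W t\<bar> \<le> 2/3"
    using W_pos[of t] W_le[of t] by simp
  have "\<bar>(3/2 * W t * N1 t) * N1 t + 4 * N1 t * (Sm t * y23 t)\<bar>
      \<le> \<bar>(3/2 * W t * N1 t) * N1 t\<bar> + \<bar>4 * N1 t * (Sm t * y23 t)\<bar>"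
    by (rule abs_triangle_ineq)
  also have "\<dots> \<le> ((3/2 * (2/3)) * (2/3)) * (2/3 / n23 t) + (4 * (2/3 / n23 t)) * (1/2)"
    using N1 W abs_Sm_mult_y23_le[of t]
    by (intro add_mono abs_mult_le_mult) auto
  finally have a: "\<bar>3/2 * W t * (N1 t)^2 + 4 * N1 t * Sm t * y23 t\<bar> \<le> 2 / n23 t"
    using n23_pos[of t] by (simp add: power2_eq_square mult.assoc field_simps)
  have "\<bar>2/3 * (W_rate t * u t)\<bar> \<le> 2/3 * (7 * (1 / n23 t))"
    using abs_W_rate_le[OF n] abs_u_le[of t] by (intro abs_mult_le_mult) auto
  also have "\<dots> \<le> 5 / n23 t"
    using n23_pos[of t] by (simp add: field_simps)
  finally have b: "\<bar>2/3 * (W_rate t * u t)\<bar> \<le> 5 / n23 t" .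
  have "\<bar>2/3 * (W t * (u_rate t - 3 * ((Sm t)^2 - (y23 t)^2)))\<bar> \<le> 2/3 * (2/3 * (4 / n23 t))"
    using W abs_u_rate_sub_le[OF n] by (intro abs_mult_le_mult) auto
  also have "\<dots> \<le> 2 / n23 t"
    using n23_pos[of t] by (simp add: field_simps)
  finally have c: "\<bar>2/3 * (W t * (u_rate t - 3 * ((Sm t)^2 - (y23 t)^2)))\<bar> \<le> 2 / n23 t" .
  have "?D - avg_w_rhs (Sp t) (W t) = - (3/2 * W t * (N1 t)^2 + 4 * N1 t * Sm t * y23 t)
      + (- (2/3 * (W_rate t * u t))) + (- (2/3 * (W t * (u_rate t - 3 * ((Sm t)^2 - (y23 t)^2)))))"
    using W_rate_eq[of t] by algebra
  then have "\<bar>?D - avg_w_rhs (Sp t) (W t)\<bar> \<le> \<bar>3/2 * W t * (N1 t)^2 + 4 * N1 t * Sm t * y23 t\<bar>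
      + \<bar>2/3 * (W_rate t * u t)\<bar> + \<bar>2/3 * (W t * (u_rate t - 3 * ((Sm t)^2 - (y23 t)^2)))\<bar>"
    using abs_add3_le by (metis abs_minus_cancel)
  also have "\<dots> \<le> 9 / n23 t"
    using a b c by (simp add: add_divide_distrib[symmetric])
  finally show "\<bar>?D - avg_w_rhs (Sp t) (W t)\<bar> \<le> 9 / n23 t" .
qed

section \<open>Growth of N2 + N3\<close>

lemma P_le_n23: "6 * P t \<le> n23 t"
proof -
  have "N2 t * N3 t \<le> (n23 t)^2 / 4"
    using zero_le_power2[of "N2 t - N3 t"] by (simp add: n23_def power2_eq_square algebra_simps)
  then have "P t \<le> (- N1 t) * ((n23 t)^2 / 4)"
    unfolding P_def using N1_neg[of t] by (simp add: mult.assoc mult_left_mono)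
  also have "\<dots> = W t * n23 t / 4"
    by (simp add: W_def power2_eq_square)
  also have "\<dots> \<le> 2/3 * n23 t / 4"
    using W_le[of t] n23_pos[of t] by (intro divide_right_mono mult_right_mono) auto
  finally show ?thesis by simp
qed

lemma P_mono:
  assumes "s \<le> t"
  shows "P s \<le> P t"
proof (rule DERIV_nonneg_imp_nondecreasing[of s t P, OF assms])
  fix x
  show "\<exists>y. (P has_real_derivative y) (at x) \<and> 0 \<le> y"
    using P_deriv[of x] q_nonneg[of x] P_pos[of x] by (intro exI[of _ "3 * q x * P x"]) auto
qed

lemma Sp_rate_ge: "1 - 2 * \<bar>Sp t\<bar> - (Sp t)^2 - (Sm t)^2 - 3 * (y23 t)^2 \<le> Sp_rate t"
proof -
  have "\<bar>(2 - q t) * Sp t\<bar> \<le> 2 * \<bar>Sp t\<bar>"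
    using q_nonneg[of t] q_le[of t] by (simp add: abs_mult mult_right_mono)
  then show ?thesis
    using constraint[of t] zero_le_power2[of "N1 t"]
    unfolding Sp_rate_def abs_le_iff mult_minus_left by linarith
qed

lemma u_rate_le: "u_rate t \<le> 3 * ((Sm t)^2 - (y23 t)^2) + 2 * \<bar>Sm t\<bar> / n23 t"
proof -
  have n: "0 < n23 t" using n23_pos .
  have "\<bar>(2 - q t) * Sm t * y23 t\<bar> \<le> 2 * \<bar>Sm t\<bar> * 1"
    using q_nonneg[of t] q_le[of t] abs_y23_le[of t]
    by (intro abs_mult_le_mult) (auto simp: abs_mult mult_right_mono)
  then have "- ((2 - q t) * Sm t * y23 t) / n23 t \<le> 2 * \<bar>Sm t\<bar> / n23 t"
    using n by (intro divide_right_mono) (auto simp: abs_le_iff)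
  then have "- ((2 - q t) * Sm t * y23 t / n23 t) \<le> 2 * \<bar>Sm t\<bar> / n23 t"
    by simp
  moreover have "3 * N1 t * (y23 t)^2 / n23 t \<le> 0"
    using N1_neg[of t] n by (simp add: divide_nonpos_pos mult_nonpos_nonneg)
  moreover have "0 \<le> 4 * (Sm t)^2 * (y23 t)^2 / (n23 t)^2"
    by simp
  ultimately show ?thesis
    unfolding u_rate_def by linarith
qed

lemma lyapunov_rate_ge:
  assumes c: "0 < c" "c \<le> n23 t"
  shows "1/2 \<le> Sp_rate t - u_rate t + (5 + 4 / c^2) * ((Sp t)^2 + (Sm t)^2)"
proof -
  have "0 \<le> (2 * \<bar>Sp t\<bar> - 1/2)^2"
    by simp
  then have Sp_abs: "2 * \<bar>Sp t\<bar> \<le> 4 * (Sp t)^2 + 1/4"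
    by (simp add: power2_eq_square algebra_simps)
  have "2 * \<bar>Sm t\<bar> / n23 t \<le> 2 * \<bar>Sm t\<bar> / c"
    using c by (intro divide_left_mono) auto
  moreover have "0 \<le> (2 * \<bar>Sm t\<bar> / c - 1/2)^2"
    by simp
  then have "2 * \<bar>Sm t\<bar> / c \<le> 4 * (Sm t)^2 / c^2 + 1/4"
    using c by (simp add: power2_eq_square algebra_simps)
  ultimately have Sm_abs: "2 * \<bar>Sm t\<bar> / n23 t \<le> 4 * (Sm t)^2 / c^2 + 1/4"
    by linarith
  have nonneg: "0 \<le> 4 * (Sp t)^2 / c^2" "0 \<le> (Sm t)^2"
    by simp_all
  show ?thesis
    using Sp_rate_ge[of t] u_rate_le[of t] Sp_abs Sm_abs
    by (simp add: algebra_simps) (use nonneg in linarith)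
qed

lemma ln_P_ge_linear: "\<exists>a b. 0 < b \<and> (\<forall>t\<ge>0. a + b * t \<le> ln (P t))"
proof -
  define c where "c = 6 * P 0"
  have c: "0 < c"
    using P_pos[of 0] by (simp add: c_def)
  have c_le: "c \<le> n23 t" if "0 \<le> t" for t
    using P_le_n23[of t] P_mono[OF that] by (simp add: c_def)
  define K where "K = 5 + 4 / c^2"
  have K: "0 < K"
    unfolding K_def by (simp add: add_pos_nonneg)
  define H where "H t = Sp t - u t + K / 6 * ln (P t) - t / 2" for t
  have H_deriv: "(H has_real_derivative Sp_rate s - u_rate s + K * ((Sp s)^2 + (Sm s)^2) - 1/2) (at s)" for s
  proof -
    have "(H has_real_derivative Sp_rate s - u_rate s + K / 6 * (3 * q s * P s / P s) - 1/2) (at s)"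
      unfolding H_def[abs_def]
      using P_pos[of s] by (auto intro!: derivative_eq_intros Sp_deriv u_deriv P_deriv)
    moreover have "Sp_rate s - u_rate s + K / 6 * (3 * q s * P s / P s) - 1/2
        = Sp_rate s - u_rate s + K * ((Sp s)^2 + (Sm s)^2) - 1/2"
      using P_pos[of s] by (simp add: q_def WH_q_def)
    ultimately show ?thesis
      by (rule DERIV_cong)
  qed
  have H_mono: "H 0 \<le> H t" if "0 \<le> t" for t
  proof (rule DERIV_nonneg_imp_nondecreasing[of 0 t H, OF that])
    fix s :: real assume "0 \<le> s"
    then have "1/2 \<le> Sp_rate s - u_rate s + K * ((Sp s)^2 + (Sm s)^2)"
      unfolding K_def using lyapunov_rate_ge[OF c c_le] by simp
    then show "\<exists>y. (H has_real_derivative y) (at s) \<and> 0 \<le> y"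
      using H_deriv by (intro exI conjI) auto
  qed
  have "6 / K * (H 0 - 1 - 1 / c) + 3 / K * t \<le> ln (P t)" if "0 \<le> t" for t
  proof -
    have "1 / n23 t \<le> 1 / c"
      using c c_le[OF that] by (intro divide_left_mono) auto
    then have "H 0 - 1 - 1 / c + t / 2 \<le> K / 6 * ln (P t)"
      using H_mono[OF that] abs_Sp_le[of t] abs_u_le[of t] unfolding H_def abs_le_iff by linarith
    then have "6 / K * (H 0 - 1 - 1 / c + t / 2) \<le> 6 / K * (K / 6 * ln (P t))"
      using K by (intro mult_left_mono) auto
    then show ?thesis
      using K by (simp add: algebra_simps)
  qed
  then show ?thesis
    using K by (intro exI[of _ "6 / K * (H 0 - 1 - 1 / c)"] exI[of _ "3 / K"]) auto
qed

lemma n23_at_top: "filterlim n23 at_top at_top"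
proof -
  obtain a b where b: "0 < b" and ln_P: "\<And>t. 0 \<le> t \<Longrightarrow> a + b * t \<le> ln (P t)"
    using ln_P_ge_linear by blast
  have "6 * (1 + (a + b * t)) \<le> n23 t" if "0 \<le> t" for t
  proof -
    have "1 + (a + b * t) \<le> exp (a + b * t)"
      by (rule exp_ge_add_one_self)
    also have "\<dots> \<le> P t"
      using ln_P[OF that] P_pos[of t] by (metis exp_le_cancel_iff exp_ln)
    finally have "6 * (1 + (a + b * t)) \<le> 6 * P t"
      by simp
    then show ?thesis
      using P_le_n23[of t] by linarith
  qed
  then have "eventually (\<lambda>t. 6 * (1 + (a + b * t)) \<le> n23 t) at_top"
    using eventually_ge_at_top[of 0] by (rule eventually_mono[rotated])
  moreover have "filterlim (\<lambda>t. 6 * (1 + (a + b * t))) at_top at_top"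
    using b by (intro filterlim_tendsto_pos_mult_at_top[OF tendsto_const] filterlim_tendsto_add_at_top[OF tendsto_const]
        filterlim_tendsto_pos_mult_at_top[OF tendsto_const _ filterlim_ident]) auto
  ultimately show ?thesis
    by (rule filterlim_at_top_mono[rotated])
qed

section \<open>Rotation of (Sm, y23)\<close>

lemma n23_rate_ge: "- n23 t / 2 - 2 \<le> (q t + 2 * Sp t) * n23 t + 4 * Sm t * y23 t"
proof -
  have "q t + 2 * Sp t = 2 * (Sp t + 1/2)^2 + 2 * (Sm t)^2 - 1/2"
    by (simp add: q_def WH_q_def power2_eq_square field_simps)
  then have "- 1/2 \<le> q t + 2 * Sp t"
    using zero_le_power2[of "Sp t + 1/2"] zero_le_power2[of "Sm t"] by linarith
  then have "- 1/2 * n23 t \<le> (q t + 2 * Sp t) * n23 t"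
    using n23_pos[of t] by (intro mult_right_mono) auto
  moreover have "- 2 \<le> 4 * (Sm t * y23 t)"
    using abs_Sm_mult_y23_le[of t] by linarith
  ultimately show ?thesis
    by (simp add: mult.assoc)
qed

lemma n23_ge_exp_decay:
  assumes "a \<le> t"
  shows "(n23 a + 4) * exp (- (t - a) / 2) \<le> n23 t + 4"
proof -
  define g where "g s = (n23 s + 4) * exp ((s - a) / 2)" for s
  have "g a \<le> g t"
  proof (rule DERIV_nonneg_imp_nondecreasing[of a t g, OF assms])
    fix x :: real
    have "(g has_real_derivative
        exp ((x - a) / 2) * ((q x + 2 * Sp x) * n23 x + 4 * Sm x * y23 x + n23 x / 2 + 2)) (at x)"
      unfolding g_def[abs_def]
      by (auto intro!: derivative_eq_intros n23_deriv simp: algebra_simps)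
    moreover have "0 \<le> exp ((x - a) / 2) * ((q x + 2 * Sp x) * n23 x + 4 * Sm x * y23 x + n23 x / 2 + 2)"
      using n23_rate_ge[of x] by (intro mult_nonneg_nonneg) auto
    ultimately show "\<exists>y. (g has_real_derivative y) (at x) \<and> 0 \<le> y"
      by blast
  qed
  then have "(n23 a + 4) * exp (- (t - a) / 2) \<le> (n23 t + 4) * exp ((t - a) / 2) * exp (- (t - a) / 2)"
    by (simp add: g_def mult_right_mono)
  also have "\<dots> = n23 t + 4"
    by (simp add: mult.assoc flip: exp_add add_divide_distrib)
  finally show ?thesis .
qed

lemma n23_ge_third:
  assumes "12 \<le> n23 a" "a \<le> t" "t \<le> a + 1"
  shows "n23 a / 3 \<le> n23 t"
proof -
  have "1/2 \<le> exp (- 1 / 2 :: real)"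
    using exp_ge_add_one_self[of "- 1 / 2 :: real"] by simp
  also have "\<dots> \<le> exp (- (t - a) / 2)"
    using assms(3) by simp
  finally have "(n23 a + 4) * (1/2) \<le> (n23 a + 4) * exp (- (t - a) / 2)"
    using n23_pos[of a] by (intro mult_left_mono) auto
  then show ?thesis
    using n23_ge_exp_decay[OF assms(2)] assms(1) by (simp add: algebra_simps)
qed

lemma rotation_rate_ge:
  "(3 * n23 t - 2) * ((Sm t)^2 + (y23 t)^2)
     \<le> ((q t + 2 * Sp t) * y23 t + 3 * Sm t * n23 t) * Sm t
       - y23 t * (- (2 - q t) * Sm t - 3 * (n23 t - N1 t) * y23 t)"
proof -
  have "\<bar>(2 + 2 * Sp t) * (Sm t * y23 t)\<bar> \<le> 4 * \<bar>Sm t * y23 t\<bar>"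
    using abs_Sp_le[of t] by (intro abs_mult_le_mult) (auto simp: abs_le_iff)
  moreover have "2 * \<bar>Sm t * y23 t\<bar> \<le> (Sm t)^2 + (y23 t)^2"
    using sum_squares_bound[of "\<bar>Sm t\<bar>" "\<bar>y23 t\<bar>"] by (simp add: abs_mult)
  moreover have "0 \<le> (- 3 * N1 t) * (y23 t)^2"
    using N1_neg[of t] by (simp add: mult_nonpos_nonneg)
  moreover have "((q t + 2 * Sp t) * y23 t + 3 * Sm t * n23 t) * Sm t
       - y23 t * (- (2 - q t) * Sm t - 3 * (n23 t - N1 t) * y23 t)
     = (2 + 2 * Sp t) * (Sm t * y23 t) + 3 * n23 t * ((Sm t)^2 + (y23 t)^2) - 3 * N1 t * (y23 t)^2"
    by (simp add: power2_eq_square algebra_simps)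
  ultimately show ?thesis
    by (simp add: algebra_simps abs_le_iff)
qed

(* arctan (y23 / Sm) is the polar angle of (Sm, y23) modulo pi. *)
lemma arctan_ratio_growth:
  assumes "a \<le> b"
    and Sm_nz: "\<And>t. a \<le> t \<Longrightarrow> t \<le> b \<Longrightarrow> Sm t \<noteq> 0"
    and n23_ge: "\<And>t. a \<le> t \<Longrightarrow> t \<le> b \<Longrightarrow> m \<le> n23 t"
  shows "(3 * m - 2) * (b - a) \<le> arctan (y23 b / Sm b) - arctan (y23 a / Sm a)"
proof -
  define g where "g s = arctan (y23 s / Sm s) - (3 * m - 2) * s" for s
  have "g a \<le> g b"
  proof (rule DERIV_nonneg_imp_nondecreasing[of a b g, OF \<open>a \<le> b\<close>])
    fix x assume x: "a \<le> x" "x \<le> b"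
    define R where "R = ((q x + 2 * Sp x) * y23 x + 3 * Sm x * n23 x) * Sm x
      - y23 x * (- (2 - q x) * Sm x - 3 * (n23 x - N1 x) * y23 x)"
    have S: "0 < (Sm x)^2 + (y23 x)^2"
      using Sm_nz[OF x] by (simp add: add_pos_nonneg)
    have "((\<lambda>s. arctan (y23 s / Sm s)) has_real_derivative
        inverse (1 + (y23 x / Sm x)^2) * (R / (Sm x * Sm x))) (at x)"
      unfolding R_def using Sm_nz[OF x]
      by (intro DERIV_chain2[OF DERIV_arctan] DERIV_divide y23_deriv Sm_deriv) auto
    moreover have "inverse (1 + (y23 x / Sm x)^2) * (R / (Sm x * Sm x)) = R / ((Sm x)^2 + (y23 x)^2)"
      using Sm_nz[OF x] by (simp add: field_simps power2_eq_square)
    ultimately have "((\<lambda>s. arctan (y23 s / Sm s)) has_real_derivative R / ((Sm x)^2 + (y23 x)^2)) (at x)"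
      by (rule DERIV_cong)
    then have "(g has_real_derivative R / ((Sm x)^2 + (y23 x)^2) - (3 * m - 2) * 1) (at x)"
      unfolding g_def[abs_def] by (intro DERIV_diff DERIV_cmult DERIV_ident)
    then have "(g has_real_derivative R / ((Sm x)^2 + (y23 x)^2) - (3 * m - 2)) (at x)"
      by simp
    moreover have "(3 * m - 2) * ((Sm x)^2 + (y23 x)^2) \<le> (3 * n23 x - 2) * ((Sm x)^2 + (y23 x)^2)"
      using n23_ge[OF x] S by (intro mult_right_mono) auto
    then have "(3 * m - 2) * ((Sm x)^2 + (y23 x)^2) \<le> R"
      unfolding R_def using rotation_rate_ge[of x] by linarith
    then have "0 \<le> R / ((Sm x)^2 + (y23 x)^2) - (3 * m - 2)"
      using S by (simp add: le_divide_eq)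
    ultimately show "\<exists>y. (g has_real_derivative y) (at x) \<and> 0 \<le> y"
      by (intro exI conjI)
  qed
  then show ?thesis
    by (simp add: g_def algebra_simps)
qed

lemma Sm_zero_free_interval_le:
  assumes "a < b" and Sm_nz: "\<And>t. a < t \<Longrightarrow> t < b \<Longrightarrow> Sm t \<noteq> 0"
    and n23_ge: "\<And>t. a < t \<Longrightarrow> t < b \<Longrightarrow> m \<le> n23 t" and k: "0 < 3 * m - 2"
  shows "(3 * m - 2) * (b - a) \<le> pi"
proof (rule ccontr)
  define k where "k = 3 * m - 2"
  assume "\<not> (3 * m - 2) * (b - a) \<le> pi"
  then have long: "pi < k * (b - a)"
    by (simp add: k_def)
  define d where "d = (k * (b - a) - pi) / (2 * k)"
  have "0 < k"
    using k by (simp add: k_def)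
  then have d: "0 < d" "d < (b - a) / 2"
    using long pi_gt_zero unfolding d_def by (simp_all add: field_simps)
  have "pi = k * ((b - d) - (a + d))"
    using \<open>0 < k\<close> unfolding d_def by (simp add: field_simps)
  also have "\<dots> \<le> arctan (y23 (b - d) / Sm (b - d)) - arctan (y23 (a + d) / Sm (a + d))"
    unfolding k_def
  proof (rule arctan_ratio_growth)
    show "a + d \<le> b - d"
      using d by simp
  next
    fix t assume "a + d \<le> t" "t \<le> b - d"
    with d show "Sm t \<noteq> 0"
      by (intro Sm_nz) auto
  next
    fix t assume "a + d \<le> t" "t \<le> b - d"
    with d show "m \<le> n23 t"
      by (intro n23_ge) auto
  qed
  also have "\<dots> < pi"
    using arctan_ubound[of "y23 (b - d) / Sm (b - d)"] arctan_lbound[of "y23 (a + d) / Sm (a + d)"] by linarith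
  finally show False
    by simp
qed

section \<open>Between consecutive zeros of Sm\<close>

lemma consecutive_zeros_close:
  assumes cz: "consecutive_zeros Sm ta tb" and big: "100 \<le> n23 ta"
  shows "tb - ta \<le> 5 / n23 ta"
    and "\<And>t. ta \<le> t \<Longrightarrow> t \<le> tb \<Longrightarrow> n23 ta / 3 \<le> n23 t"
proof -
  have "ta < tb" and Sm_nz: "\<And>t. ta < t \<Longrightarrow> t < tb \<Longrightarrow> Sm t \<noteq> 0"
    using cz unfolding consecutive_zeros_def by auto
  (* n23 is controlled only for one time unit after ta, which suffices to see that tb comes earlier. *)
  define b where "b = min tb (ta + 1)"
  have "ta < b"
    using \<open>ta < tb\<close> by (simp add: b_def)
  have "(3 * (n23 ta / 3) - 2) * (b - ta) \<le> pi"
    using big by (intro Sm_zero_free_interval_le[OF \<open>ta < b\<close>] Sm_nz n23_ge_third) (auto simp: b_def)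
  then have "(n23 ta - 2) * (b - ta) \<le> 4"
    using pi_less_4 by simp
  then have "b - ta \<le> 4 / (n23 ta - 2)"
    using big by (simp add: field_simps)
  also have "\<dots> \<le> 5 / n23 ta"
    using big by (simp add: field_simps)
  finally have "b - ta \<le> 5 / n23 ta" .
  moreover have "5 / n23 ta < 1"
    using big by simp
  ultimately have "b = tb"
    unfolding b_def by (simp add: min_def split: if_splits)
  with \<open>b - ta \<le> 5 / n23 ta\<close> show "tb - ta \<le> 5 / n23 ta"
    by simp
  fix t assume "ta \<le> t" "t \<le> tb"
  with \<open>b = tb\<close> show "n23 ta / 3 \<le> n23 t"
    using big by (intro n23_ge_third) (auto simp: b_def)
qed

lemma Sp_W_drift_between_zeros:
  assumes cz: "consecutive_zeros Sm ta tb" and big: "100 \<le> n23 ta" and t: "ta \<le> t" "t \<le> tb"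
  shows "\<bar>Sp t - Sp ta\<bar> \<le> 30 / n23 ta" and "\<bar>W t - W ta\<bar> \<le> 35 / n23 ta"
proof -
  note close = consecutive_zeros_close[OF cz big]
  have dt: "t - ta \<le> 5 / n23 ta"
    using close(1) t by linarith
  have "\<bar>Sp t - Sp ta - 0 * (t - ta)\<bar> \<le> 6 * (t - ta)"
    using t(1) Sp_deriv abs_Sp_rate_le by (intro abs_change_sub_linear_le) auto
  then show "\<bar>Sp t - Sp ta\<bar> \<le> 30 / n23 ta"
    using dt by simp
  have "1 \<le> n23 s" if "ta \<le> s" "s \<le> t" for s
    using close(2)[of s] that t big by simp
  then have "\<bar>W t - W ta - 0 * (t - ta)\<bar> \<le> 7 * (t - ta)"
    using t(1) W_deriv abs_W_rate_le by (intro abs_change_sub_linear_le) auto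
  then show "\<bar>W t - W ta\<bar> \<le> 35 / n23 ta"
    using dt by simp
qed

lemma change_between_zeros_by_correction:
  fixes V f :: "real \<Rightarrow> real" and F :: "real \<Rightarrow> real \<Rightarrow> real"
  assumes cz: "consecutive_zeros Sm ta tb" and big: "100 \<le> n23 ta" and "0 \<le> K" "0 \<le> L"
    and V_eq: "\<And>t. Sm t = 0 \<Longrightarrow> V t = f t"
    and V_rate: "\<And>t. 1 \<le> n23 t \<Longrightarrow>
      \<exists>D. (V has_real_derivative D) (at t) \<and> \<bar>D - F (Sp t) (W t)\<bar> \<le> K / n23 t"
    and F_drift: "\<And>t. ta \<le> t \<Longrightarrow> t \<le> tb \<Longrightarrow> \<bar>F (Sp t) (W t) - F (Sp ta) (W ta)\<bar> \<le> L / n23 ta"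
  shows "\<bar>f tb - f ta - F (Sp ta) (W ta) * (tb - ta)\<bar> \<le> 5 * (3 * K + L) / (n23 ta)^2"
proof -
  note close = consecutive_zeros_close[OF cz big]
  have zeros: "ta \<le> tb" "Sm ta = 0" "Sm tb = 0"
    using cz unfolding consecutive_zeros_def by auto
  have "\<exists>D. (V has_real_derivative D) (at t) \<and> \<bar>D - F (Sp ta) (W ta)\<bar> \<le> (3 * K + L) / n23 ta"
    if t: "ta \<le> t" "t \<le> tb" for t
  proof -
    have n: "n23 ta / 3 \<le> n23 t" "1 \<le> n23 t"
      using close(2)[OF t] big by auto
    obtain D where D: "(V has_real_derivative D) (at t)" "\<bar>D - F (Sp t) (W t)\<bar> \<le> K / n23 t"
      using V_rate[OF n(2)] by blast
    have "K / n23 t \<le> 3 * K / n23 ta"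
      using n big \<open>0 \<le> K\<close> by (simp add: field_simps mult_left_mono)
    then show ?thesis
      using D F_drift[OF t] by (intro exI[of _ D]) (simp add: abs_le_iff add_divide_distrib)
  qed
  then have "\<bar>V tb - V ta - F (Sp ta) (W ta) * (tb - ta)\<bar> \<le> (3 * K + L) / n23 ta * (tb - ta)"
    using zeros(1) by (rule abs_change_sub_linear_le[rotated])
  also have "\<dots> \<le> (3 * K + L) / n23 ta * (5 / n23 ta)"
    using close(1) zeros(1) big \<open>0 \<le> K\<close> \<open>0 \<le> L\<close> by (intro mult_left_mono) auto
  finally show ?thesis
    using zeros V_eq by (simp add: power2_eq_square mult.commute)
qed

lemma Sp_change_between_zeros:
  assumes cz: "consecutive_zeros Sm ta tb" and big: "100 \<le> n23 ta"
  shows "\<bar>Sp tb - Sp ta - avg_Sp_rhs (Sp ta) (W ta) * (tb - ta)\<bar> \<le> 4000 / (n23 ta)^2"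
proof -
  have "\<bar>Sp tb - Sp ta - avg_Sp_rhs (Sp ta) (W ta) * (tb - ta)\<bar> \<le> 5 * (3 * 7 + 385) / (n23 ta)^2"
  proof (rule change_between_zeros_by_correction[OF cz big])
    show "Sp_corrected t = Sp t" if "Sm t = 0" for t
      using that by (simp add: Sp_corrected_def u_def)
    show "\<bar>avg_Sp_rhs (Sp t) (W t) - avg_Sp_rhs (Sp ta) (W ta)\<bar> \<le> 385 / n23 ta"
      if "ta \<le> t" "t \<le> tb" for t
      using avg_Sp_rhs_lipschitz[of "Sp t" "Sp ta" "W t" "W ta"] Sp_W_drift_between_zeros[OF cz big that]
        abs_Sp_le[of t] abs_Sp_le[of ta] W_pos[of t] W_le[of t] by fastforce
  qed (use Sp_corrected_rate in auto)
  also have "\<dots> \<le> 4000 / (n23 ta)^2"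
    by (simp add: divide_right_mono)
  finally show ?thesis .
qed

lemma W_change_between_zeros:
  assumes cz: "consecutive_zeros Sm ta tb" and big: "100 \<le> n23 ta"
  shows "\<bar>W tb - W ta - avg_w_rhs (Sp ta) (W ta) * (tb - ta)\<bar> \<le> 4000 / (n23 ta)^2"
proof -
  have "\<bar>W tb - W ta - avg_w_rhs (Sp ta) (W ta) * (tb - ta)\<bar> \<le> 5 * (3 * 9 + 600) / (n23 ta)^2"
  proof (rule change_between_zeros_by_correction[OF cz big])
    show "W_corrected t = W t" if "Sm t = 0" for t
      using that by (simp add: W_corrected_def u_def)
    show "\<bar>avg_w_rhs (Sp t) (W t) - avg_w_rhs (Sp ta) (W ta)\<bar> \<le> 600 / n23 ta"
      if "ta \<le> t" "t \<le> tb" for t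
      using avg_w_rhs_lipschitz[of "Sp t" "Sp ta" "W t" "W ta"] Sp_W_drift_between_zeros[OF cz big that]
        abs_Sp_le[of t] abs_Sp_le[of ta] W_pos[of t] W_le[of t] W_pos[of ta] W_le[of ta] by fastforce
  qed (use W_corrected_rate in auto)
  also have "\<dots> \<le> 4000 / (n23 ta)^2"
    by (simp add: divide_right_mono)
  finally show ?thesis .
qed

lemma averaged_estimates_eventually:
  "\<exists>T. \<forall>ta tb. consecutive_zeros Sm ta tb \<and> T \<le> ta \<longrightarrow>
      \<bar>Sp tb - Sp ta - avg_Sp_rhs (Sp ta) (W ta) * (tb - ta)\<bar> \<le> 4000 * n23 ta powr (-3/2) \<and>
      \<bar>W tb - W ta - avg_w_rhs (Sp ta) (W ta) * (tb - ta)\<bar> \<le> 4000 * n23 ta powr (-3/2)"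
proof -
  obtain T where big: "\<And>t. T \<le> t \<Longrightarrow> 100 \<le> n23 t"
    using n23_at_top by (auto simp: filterlim_at_top eventually_at_top_linorder)
  have "4000 / (n23 ta)^2 \<le> 4000 * n23 ta powr (-3/2)" if "T \<le> ta" for ta
    using big[OF that] by (intro div_square_le_powr_neg_three_halves) auto
  then show ?thesis
    using big Sp_change_between_zeros W_change_between_zeros by (blast intro: order_trans)
qed

end

theorem mainTheorem17:
  shows "\<exists>C::real. \<forall>N1 N2 N3 Sp Sm.
    WH_solution N1 N2 N3 Sp Sm \<and> (\<forall>t. N1 t < 0 \<and> N2 t > 0 \<and> N3 t > 0) \<longrightarrow>
    (\<exists>T::real. \<forall>ta tb.
       consecutive_zeros Sm ta tb \<and> ta \<ge> T \<and>
       sqrt ((Sm ta)^2 + (3/4) * (N2 ta - N3 ta)^2) \<ge> (N2 ta + N3 ta) powr (-1/2) \<longrightarrow>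
       (let z1 = Sp ta; z2 = Sp tb;
            w1 = - (N1 ta * (N2 ta + N3 ta)); w2 = - (N1 tb * (N2 tb + N3 tb));
            bound = C * (N2 ta + N3 ta) powr (-3/2)
        in \<bar>(z2 - z1) - (- (1 - z1) * (1 + z1)^2 + (3/2) * w1 * (2 - z1)) * (tb - ta)\<bar> \<le> bound
         \<and> \<bar>(w2 - w1) - (2 * z1^2 - 2 * z1 + 2 - 3 * w1) * w1 * (tb - ta)\<bar> \<le> bound))"
  apply (rule exI[of _ 4000], intro allI impI)
  subgoal premises sol for N1 N2 N3 Sp Sm
  proof -
    interpret bianchi_VIII_solution N1 N2 N3 Sp Sm
      using sol by unfold_locales auto
    show ?thesis
      using averaged_estimates_eventually
      by (simp add: Let_def n23_def W_def avg_Sp_rhs_def avg_w_rhs_def) blast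
  qed
  done

end
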